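(* Let $G$ be a connected graph obtained by point-attaching from pairwise disjoint connected graphs $G_1,\dots,G_k$. Then $\chi_{dom}(G)\le \chi_{dom}(G_1)+\chi_{dom}(G_2)+\cdots+\chi_{dom}(G_k)$.
   Context: All graphs are finite and simple. A dominated coloring of a graph is a proper coloring in which every color class is dominated by at least one vertex, i.e. for each color class $C$ there is a vertex adjacent to every vertex of $C$; $\chi_{dom}$ denotes the minimum number of colors in a dominated coloring. Point-attaching: given pairwise disjoint connected graphs $G_1,\dots,G_k$, select a vertex of $G_1$ and a vertex of $G_2$ and identify them; then continue inductively, each time identifying a vertex of the graph built so far with a vertex of the next $G_i$. The resulting connected graph is said to be obtained by point-attaching from $G_1,\dots,G_k$. *)

theory Defs
  imports Main
begin

type_synonym 'a graph = "'a set \<times> ('a \<times> 'a) set"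

definition verts :: "'a graph \<Rightarrow> 'a set" where "verts G = fst G"
definition edges :: "'a graph \<Rightarrow> ('a \<times> 'a) set" where "edges G = snd G"

definition simple_graph :: "'a graph \<Rightarrow> bool" where
  "simple_graph G \<longleftrightarrow> finite (verts G) \<and> edges G \<subseteq> verts G \<times> verts G
     \<and> sym (edges G) \<and> irrefl (edges G)"

definition connected_graph :: "'a graph \<Rightarrow> bool" where
  "connected_graph G \<longleftrightarrow> simple_graph G \<and> verts G \<noteq> {}
     \<and> (\<forall>x\<in>verts G. \<forall>y\<in>verts G. (x, y) \<in> (edges G)\<^sup>*)"

definition dominated_coloring :: "'a graph \<Rightarrow> ('a \<Rightarrow> nat) \<Rightarrow> bool" where
  "dominated_coloring G c \<longleftrightarrow>
     (\<forall>(x, y) \<in> edges G. c x \<noteq> c y)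
     \<and> (\<forall>i \<in> c ` verts G. \<exists>w \<in> verts G.
           \<forall>x \<in> verts G. c x = i \<longrightarrow> (w, x) \<in> edges G)"

definition chi_dom :: "'a graph \<Rightarrow> nat" where
  "chi_dom G = (LEAST n. \<exists>c. dominated_coloring G c \<and> card (c ` verts G) = n)"

definition attach :: "'a graph \<Rightarrow> 'a \<Rightarrow> 'a graph \<Rightarrow> 'a \<Rightarrow> 'a graph" where
  "attach G u H v =
     (let r = (\<lambda>x. if x = v then u else x) in
      (verts G \<union> r ` verts H, edges G \<union> (\<lambda>(x, y). (r x, r y)) ` edges H))"

inductive point_attaching :: "'a graph list \<Rightarrow> 'a graph \<Rightarrow> bool" where
  single: "point_attaching [G] G"
| step: "point_attaching Gs G \<Longrightarrow> u \<in> verts G \<Longrightarrow> v \<in> verts H \<Longrightarrow>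
           point_attaching (Gs @ [H]) (attach G u H v)"

end

theory Submission
  imports Defs
begin

text \<open>Color the graph built so far by a minimum dominated coloring and the newly attached
block by a minimum dominated coloring shifted above all colors already in use; the
identified vertex keeps its old color. The two parts share only that vertex, so the
result is proper, and every color class lies inside one part, where its old dominating
vertex (renamed if it was the identified one) still dominates it. Hence the number of
colors is at most the sum of the two values of chi_dom, and induction along the
point-attaching sequence gives the bound.\<close>

lemma dominated_coloringI:
  assumes "\<And>x y. (x, y) \<in> edges G \<Longrightarrow> c x \<noteq> c y"
    and "\<And>x. x \<in> verts G \<Longrightarrow> \<exists>w\<in>verts G. \<forall>y\<in>verts G. c y = c x \<longrightarrow> (w, y) \<in> edges G"
  shows "dominated_coloring G c"
  using assms unfolding dominated_coloring_def by fast

lemma dominated_coloring_proper: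
  "dominated_coloring G c \<Longrightarrow> (x, y) \<in> edges G \<Longrightarrow> c x \<noteq> c y"
  unfolding dominated_coloring_def by blast

lemma dominated_coloring_dominator:
  assumes "dominated_coloring G c" and "x \<in> verts G"
  obtains w where "w \<in> verts G" and "\<And>y. y \<in> verts G \<Longrightarrow> c y = c x \<Longrightarrow> (w, y) \<in> edges G"
  using assms unfolding dominated_coloring_def by blast

lemma chi_dom_le_card: "dominated_coloring G c \<Longrightarrow> chi_dom G \<le> card (c ` verts G)"
  unfolding chi_dom_def by (rule Least_le) blast

lemma chi_dom_attained:
  assumes "dominated_coloring G c0"
  obtains c where "dominated_coloring G c" and "card (c ` verts G) = chi_dom G"
proof -
  have "\<exists>n c. dominated_coloring G c \<and> card (c ` verts G) = n"
    using assms by blast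
  from LeastI_ex[OF this] show ?thesis
    using that unfolding chi_dom_def by blast
qed

lemma verts_attach:
  "u \<in> verts G \<Longrightarrow> verts (attach G u H v) = verts G \<union> (verts H - {v})"
  unfolding attach_def verts_def by auto

lemma edges_attach:
  "edges (attach G u H v) = edges G \<union> map_prod (id(v := u)) (id(v := u)) ` edges H"
  unfolding attach_def edges_def by (simp add: Let_def map_prod_def fun_upd_def id_def)

lemma simple_graph_attach:
  assumes G: "simple_graph G" and H: "simple_graph H"
    and disjoint: "verts G \<inter> verts H = {}" and u: "u \<in> verts G"
  shows "simple_graph (attach G u H v)"
  unfolding simple_graph_def
proof (intro conjI)
  let ?r = "id(v := u)"
  have EG: "edges G \<subseteq> verts G \<times> verts G" and EH: "edges H \<subseteq> verts H \<times> verts H"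
    and "sym (edges G)" "sym (edges H)" "irrefl (edges G)" "irrefl (edges H)"
    using G H unfolding simple_graph_def by auto
  show "finite (verts (attach G u H v))"
    using G H unfolding verts_attach[OF u] simple_graph_def by simp
  have "?r a \<in> verts (attach G u H v)" if "a \<in> verts H" for a
    using that u unfolding verts_attach[OF u] by simp
  then have "map_prod ?r ?r ` edges H \<subseteq> verts (attach G u H v) \<times> verts (attach G u H v)"
    using EH by force
  moreover have "edges G \<subseteq> verts (attach G u H v) \<times> verts (attach G u H v)"
    using EG unfolding verts_attach[OF u] by blast
  ultimately show "edges (attach G u H v) \<subseteq> verts (attach G u H v) \<times> verts (attach G u H v)"
    unfolding edges_attach by blast
  show "sym (edges (attach G u H v))"
    using \<open>sym (edges G)\<close> \<open>sym (edges H)\<close> unfolding edges_attach sym_def by auto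
  have "?r a \<noteq> ?r b" if "(a, b) \<in> edges H" for a b
    using that EH disjoint u \<open>irrefl (edges H)\<close> unfolding irrefl_def by auto
  then show "irrefl (edges (attach G u H v))"
    using \<open>irrefl (edges G)\<close> unfolding edges_attach irrefl_def by auto
qed

locale attach_colorings =
  fixes G H :: "'a graph" and u v :: 'a and cG cH :: "'a \<Rightarrow> nat" and N :: nat
  assumes G: "simple_graph G" and H: "simple_graph H"
    and disjoint: "verts G \<inter> verts H = {}" and u: "u \<in> verts G"
    and cG: "dominated_coloring G cG" and cH: "dominated_coloring H cH"
    and cG_less: "\<And>x. x \<in> verts G \<Longrightarrow> cG x < N"
begin

definition coloring :: "'a \<Rightarrow> nat" where
  "coloring x = (if x \<in> verts G then cG x else N + cH x)"

lemma coloring_G: "x \<in> verts G \<Longrightarrow> coloring x = cG x"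
  unfolding coloring_def by simp

lemma coloring_H:
  "x \<in> verts H \<Longrightarrow> coloring ((id(v := u)) x) = (if x = v then cG u else N + cH x)"
  using u disjoint unfolding coloring_def by auto

lemma coloring_less_iff:
  "x \<in> verts (attach G u H v) \<Longrightarrow> coloring x < N \<longleftrightarrow> x \<in> verts G"
  using u cG_less unfolding coloring_def by (auto simp: verts_attach)

lemma coloring_proper:
  assumes "(x, y) \<in> edges (attach G u H v)"
  shows "coloring x \<noteq> coloring y"
  using assms unfolding edges_attach
proof
  assume "(x, y) \<in> edges G"
  moreover have "x \<in> verts G" "y \<in> verts G"
    using calculation G unfolding simple_graph_def by auto
  ultimately show ?thesis
    using cG by (simp add: coloring_G dominated_coloring_proper)
next
  assume "(x, y) \<in> map_prod (id(v := u)) (id(v := u)) ` edges H"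
  then obtain a b where ab: "(a, b) \<in> edges H" "x = (id(v := u)) a" "y = (id(v := u)) b"
    by auto
  have "a \<in> verts H" "b \<in> verts H"
    using ab(1) H unfolding simple_graph_def by auto
  moreover have "cH a \<noteq> cH b"
    using ab(1) cH by (rule dominated_coloring_proper[rotated])
  moreover have "coloring x = (if a = v then cG u else N + cH a)"
    and "coloring y = (if b = v then cG u else N + cH b)"
    using ab coloring_H calculation(1,2) by simp_all
  ultimately show ?thesis
    using cG_less[OF u] by auto
qed

lemma coloring_class_dominated:
  assumes x: "x \<in> verts (attach G u H v)"
  shows "\<exists>w\<in>verts (attach G u H v). \<forall>y\<in>verts (attach G u H v).
           coloring y = coloring x \<longrightarrow> (w, y) \<in> edges (attach G u H v)"
proof (cases "x \<in> verts G")
  case True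
  obtain w where w: "w \<in> verts G" "\<And>y. y \<in> verts G \<Longrightarrow> cG y = cG x \<Longrightarrow> (w, y) \<in> edges G"
    using dominated_coloring_dominator[OF cG True] by blast
  have "(w, y) \<in> edges (attach G u H v)"
    if "y \<in> verts (attach G u H v)" "coloring y = coloring x" for y
  proof -
    have "y \<in> verts G"
      using that x True coloring_less_iff by metis
    then show ?thesis
      using that True w(2) by (simp add: coloring_G edges_attach)
  qed
  then show ?thesis
    using w(1) u by (auto simp: verts_attach)
next
  case False
  then have xH: "x \<in> verts H" "x \<noteq> v"
    using x u by (auto simp: verts_attach)
  obtain w where w: "w \<in> verts H" "\<And>y. y \<in> verts H \<Longrightarrow> cH y = cH x \<Longrightarrow> (w, y) \<in> edges H"
    using dominated_coloring_dominator[OF cH xH(1)] by blast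
  have "((id(v := u)) w, y) \<in> edges (attach G u H v)"
    if "y \<in> verts (attach G u H v)" "coloring y = coloring x" for y
  proof -
    have yH: "y \<in> verts H" "y \<noteq> v"
      using that x False coloring_less_iff u by (metis DiffE UnE insertI1 verts_attach)+
    then have "cH y = cH x"
      using that(2) coloring_H[OF yH(1)] coloring_H[OF xH(1)] xH(2) by simp
    then have "((id(v := u)) w, (id(v := u)) y) \<in> edges (attach G u H v)"
      using w yH unfolding edges_attach by blast
    then show ?thesis
      using yH(2) by simp
  qed
  moreover have "(id(v := u)) w \<in> verts (attach G u H v)"
    using w(1) u by (auto simp: verts_attach)
  ultimately show ?thesis
    by blast
qed

lemma dominated_coloring_coloring: "dominated_coloring (attach G u H v) coloring"
  by (rule dominated_coloringI) (use coloring_proper coloring_class_dominated in auto)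

lemma card_coloring_le:
  "card (coloring ` verts (attach G u H v)) \<le> card (cG ` verts G) + card (cH ` verts H)"
proof -
  have fin: "finite (verts G)" "finite (verts H)"
    using G H unfolding simple_graph_def by auto
  have "coloring ` verts (attach G u H v) \<subseteq> cG ` verts G \<union> (+) N ` cH ` verts H"
    using u by (auto simp: verts_attach coloring_def)
  then have "card (coloring ` verts (attach G u H v)) \<le> card (cG ` verts G \<union> (+) N ` cH ` verts H)"
    using fin by (intro card_mono) auto
  also have "\<dots> \<le> card (cG ` verts G) + card ((+) N ` cH ` verts H)"
    by (rule card_Un_le)
  also have "\<dots> \<le> card (cG ` verts G) + card (cH ` verts H)"
    using card_image_le fin by auto
  finally show ?thesis .
qed

end

lemma dominated_coloring_attach:
  assumes "simple_graph G" "simple_graph H" "verts G \<inter> verts H = {}" "u \<in> verts G"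
    and "dominated_coloring G cG" "dominated_coloring H cH"
  obtains c where "dominated_coloring (attach G u H v) c"
    and "card (c ` verts (attach G u H v)) \<le> card (cG ` verts G) + card (cH ` verts H)"
proof -
  obtain N where "\<And>x. x \<in> verts G \<Longrightarrow> cG x < N"
    using \<open>simple_graph G\<close> unfolding simple_graph_def
    by (metis finite_imageI finite_nat_set_iff_bounded imageI)
  then interpret attach_colorings G H u v cG cH N
    using assms by unfold_locales
  show ?thesis
    using that dominated_coloring_coloring card_coloring_le by blast
qed

definition pairwise_disjoint_nth :: "('b \<Rightarrow> 'c set) \<Rightarrow> 'b list \<Rightarrow> bool" where
  "pairwise_disjoint_nth f xs \<longleftrightarrow>
     (\<forall>i < length xs. \<forall>j < length xs. i \<noteq> j \<longrightarrow> f (xs ! i) \<inter> f (xs ! j) = {})"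

lemma pairwise_disjoint_nth_snoc:
  assumes "pairwise_disjoint_nth f (xs @ [x])"
  shows "pairwise_disjoint_nth f xs" and "(\<Union>y\<in>set xs. f y) \<inter> f x = {}"
proof -
  show "pairwise_disjoint_nth f xs"
    unfolding pairwise_disjoint_nth_def
  proof (intro allI impI)
    fix i j assume "i < length xs" "j < length xs" "i \<noteq> j"
    then show "f (xs ! i) \<inter> f (xs ! j) = {}"
      using assms[unfolded pairwise_disjoint_nth_def, rule_format, of i j]
      by (simp add: nth_append)
  qed
  have "f (xs ! i) \<inter> f x = {}" if "i < length xs" for i
    using that assms[unfolded pairwise_disjoint_nth_def, rule_format, of i "length xs"]
    by (simp add: nth_append)
  then show "(\<Union>y\<in>set xs. f y) \<inter> f x = {}"
    by (force simp: set_conv_nth)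
qed

lemma point_attaching_verts_subset:
  "point_attaching Gs G \<Longrightarrow> verts G \<subseteq> (\<Union>H\<in>set Gs. verts H)"
  by (induction rule: point_attaching.induct) (auto simp: verts_attach)

lemma point_attaching_disjoint_snoc:
  assumes "point_attaching Gs G" and "pairwise_disjoint_nth verts (Gs @ [H])"
  shows "verts G \<inter> verts H = {}"
  using point_attaching_verts_subset[OF assms(1)] pairwise_disjoint_nth_snoc(2)[OF assms(2)]
  by blast

lemma point_attaching_simple_graph:
  "point_attaching Gs G \<Longrightarrow> \<forall>H\<in>set Gs. simple_graph H \<Longrightarrow> pairwise_disjoint_nth verts Gs
    \<Longrightarrow> simple_graph G"
proof (induction rule: point_attaching.induct)
  case (single G)
  then show ?case by simp
next
  case (step Gs G u v H)
  have "simple_graph G"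
    using step.IH step.prems(1) pairwise_disjoint_nth_snoc(1)[OF step.prems(2)] by simp
  moreover have "simple_graph H"
    using step.prems(1) by simp
  moreover have "verts G \<inter> verts H = {}"
    using step.hyps(1) step.prems(2) by (rule point_attaching_disjoint_snoc)
  ultimately show ?case
    using step.hyps(2) by (rule simple_graph_attach)
qed

lemma point_attaching_dominated_coloring:
  "point_attaching Gs G \<Longrightarrow> \<forall>H\<in>set Gs. simple_graph H \<Longrightarrow> pairwise_disjoint_nth verts Gs
    \<Longrightarrow> \<forall>H\<in>set Gs. \<exists>c. dominated_coloring H c
    \<Longrightarrow> \<exists>c. dominated_coloring G c \<and> card (c ` verts G) \<le> (\<Sum>H\<leftarrow>Gs. chi_dom H)"
proof (induction rule: point_attaching.induct)
  case (single G)
  from single.prems(3) obtain c0 where "dominated_coloring G c0"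
    by auto
  then obtain c where "dominated_coloring G c" "card (c ` verts G) = chi_dom G"
    by (rule chi_dom_attained)
  then show ?case
    by auto
next
  case (step Gs G u v H)
  have disjoint_Gs: "pairwise_disjoint_nth verts Gs"
    using step.prems(2) by (rule pairwise_disjoint_nth_snoc(1))
  moreover have "\<forall>H\<in>set Gs. simple_graph H" "\<forall>H\<in>set Gs. \<exists>c. dominated_coloring H c"
    using step.prems(1,3) by simp_all
  ultimately obtain cG where cG: "dominated_coloring G cG" "card (cG ` verts G) \<le> (\<Sum>H\<leftarrow>Gs. chi_dom H)"
    using step.IH by meson
  from step.prems(3) obtain c0 where "dominated_coloring H c0"
    by auto
  then obtain cH where cH: "dominated_coloring H cH" "card (cH ` verts H) = chi_dom H"
    by (rule chi_dom_attained)
  have "simple_graph G"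
    using point_attaching_simple_graph[OF step.hyps(1) _ disjoint_Gs] step.prems(1) by simp
  moreover have "simple_graph H"
    using step.prems(1) by simp
  moreover have "verts G \<inter> verts H = {}"
    using step.hyps(1) step.prems(2) by (rule point_attaching_disjoint_snoc)
  ultimately obtain c where c: "dominated_coloring (attach G u H v) c"
    "card (c ` verts (attach G u H v)) \<le> card (cG ` verts G) + card (cH ` verts H)"
    using step.hyps(2) cG(1) cH(1) by (rule dominated_coloring_attach)
  have "card (c ` verts (attach G u H v)) \<le> (\<Sum>H'\<leftarrow>Gs @ [H]. chi_dom H')"
    using c(2) cG(2) cH(2) by simp
  with c(1) show ?case
    by blast
qed

theorem mainTheorem2:
  fixes Gs :: "'a graph list" and G :: "'a graph"
  assumes "Gs \<noteq> []"
    and "\<forall>i < length Gs. connected_graph (Gs ! i)"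
    and "\<forall>i < length Gs. \<forall>j < length Gs. i \<noteq> j \<longrightarrow> verts (Gs ! i) \<inter> verts (Gs ! j) = {}"
    and "\<forall>i < length Gs. \<exists>c. dominated_coloring (Gs ! i) c"
    and "point_attaching Gs G"
  shows "chi_dom G \<le> (\<Sum>i < length Gs. chi_dom (Gs ! i))"
proof -
  have "\<forall>H\<in>set Gs. simple_graph H" "\<forall>H\<in>set Gs. \<exists>c. dominated_coloring H c"
    using assms(2,4) unfolding all_set_conv_all_nth connected_graph_def by auto
  moreover have "pairwise_disjoint_nth verts Gs"
    using assms(3) unfolding pairwise_disjoint_nth_def .
  ultimately obtain c where "dominated_coloring G c" "card (c ` verts G) \<le> (\<Sum>H\<leftarrow>Gs. chi_dom H)"
    using point_attaching_dominated_coloring assms(5) by blast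
  then have "chi_dom G \<le> (\<Sum>H\<leftarrow>Gs. chi_dom H)"
    using chi_dom_le_card order_trans by blast
  then show ?thesis
    by (simp add: sum_list_sum_nth atLeast0LessThan)
qed

end
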